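(* Let $W$ be an $\epsilon$-spectral cluster of $G_0$, let $V\subseteq V_0$ be closed in $G_0$ and dominate $W$, let $G=G_0|V$, and let $S\subseteq V$ be such that $S$ and $\overline S=V\setminus S$ are both closed in $G$ and $\overline S$ dominates $W$. Perform the big expansion of $S$ inside $G$ (a grab, then local improvements of $S$, then a grab, then local improvements of $S$), followed by local improvements of $\overline S$ (while there exists $v\in S$ with $d_G(v)>0$ and at least $\frac59 d_G(v)$ of its $G$-neighbors in $V\setminus S$, move $v$ from $S$ to $\overline S$). Then the final set $\overline S$ dominates $W$.
   Context: Standing setting: $G_0=(V_0,E_0)$ is a finite simple undirected graph and $0<\epsilon\le 1/2000000$. For a graph $H$, $d_H(v)$ is the degree, $\mathrm{vol}_H(S)=\sum_{v\in S}d_H(v)$, $E(S,T)$ is the set of edges with one endpoint in $S$ and the other in $T$, $\partial_H S=E(S,V(H)\setminus S)$. For $V\subseteq V_0$, $G_0|V$ is the induced subgraph. An $\epsilon$-spectral cluster of $G_0$ is $W\subseteq V_0$ with $\mathrm{vol}_{G_0}(W)>0$, $|\partial_{G_0}W|\le\epsilon\,\mathrm{vol}_{G_0}(W)$, and for every $A\subseteq W$ with $r=\mathrm{vol}_{G_0}(A)/\mathrm{vol}_{G_0}(W)$, $|E(A,W\setminus A)|\ge(r(1-r)-\epsilon)\mathrm{vol}_{G_0}(W)$. A set $A\subseteq V(H)$ is closed in $H$ if no $v\in V(H)\setminus A$ with $d_H(v)>0$ has at least $\frac59 d_H(v)$ of its $H$-neighbors in $A$. A set $A\subseteq V_0$ dominates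 $W$ if $\mathrm{vol}_{G_0}(W\cap A)>(1-3\epsilon)\mathrm{vol}_{G_0}(W)$. A grab of $S$ in $G$ replaces $S$ by $S\cup T$, where $T$ is the set of all $v\in V\setminus S$ with $d_G(v)>0$ having at least $\frac16 d_G(v)$ of their $G$-neighbors in $S$ (computed before the grab). Local improvements of $S$ in $G$: while there exists $v\in V\setminus S$ with $d_G(v)>0$ and at least $\frac59 d_G(v)$ of its $G$-neighbors in $S$, add $v$ to $S$. *)

theory Defs
  imports Complex_Main
begin

text \<open>A finite simple undirected graph is given by a finite vertex set V0 and a
symmetric irreflexive edge relation E on V0 (ordered pairs, both orientations present).
For V a subset of V0, the induced subgraph G0|V has vertex set V and edges E restricted to V.\<close>

definition simple_graph :: "'a set \<Rightarrow> ('a \<times> 'a) set \<Rightarrow> bool" where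
  "simple_graph V0 E \<longleftrightarrow> finite V0 \<and> E \<subseteq> V0 \<times> V0 \<and> sym E \<and> irrefl E"

definition nbrs :: "('a \<times> 'a) set \<Rightarrow> 'a set \<Rightarrow> 'a \<Rightarrow> 'a set" where
  "nbrs E V v = {u \<in> V. (v, u) \<in> E}"

definition deg :: "('a \<times> 'a) set \<Rightarrow> 'a set \<Rightarrow> 'a \<Rightarrow> nat" where
  "deg E V v = card (nbrs E V v)"

definition vol :: "('a \<times> 'a) set \<Rightarrow> 'a set \<Rightarrow> 'a set \<Rightarrow> nat" where
  "vol E V S = (\<Sum>v\<in>S. deg E V v)"

definition edges_between :: "('a \<times> 'a) set \<Rightarrow> 'a set \<Rightarrow> 'a set \<Rightarrow> 'a set set" where
  "edges_between E S T = {{u, v} | u v. u \<in> S \<and> v \<in> T \<and> (u, v) \<in> E}"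

definition spectral_cluster :: "'a set \<Rightarrow> ('a \<times> 'a) set \<Rightarrow> real \<Rightarrow> 'a set \<Rightarrow> bool" where
  "spectral_cluster V0 E eps W \<longleftrightarrow>
     W \<subseteq> V0 \<and> vol E V0 W > 0 \<and>
     real (card (edges_between E W (V0 - W))) \<le> eps * real (vol E V0 W) \<and>
     (\<forall>A \<subseteq> W. let r = real (vol E V0 A) / real (vol E V0 W) in
        real (card (edges_between E A (W - A))) \<ge> (r * (1 - r) - eps) * real (vol E V0 W))"

definition closed_in_graph :: "('a \<times> 'a) set \<Rightarrow> 'a set \<Rightarrow> 'a set \<Rightarrow> bool" where
  "closed_in_graph E V A \<longleftrightarrow>
     (\<forall>v \<in> V - A. deg E V v > 0 \<longrightarrow>
        \<not> (real (card (nbrs E V v \<inter> A)) \<ge> 5/9 * real (deg E V v)))"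

definition dominates :: "'a set \<Rightarrow> ('a \<times> 'a) set \<Rightarrow> real \<Rightarrow> 'a set \<Rightarrow> 'a set \<Rightarrow> bool" where
  "dominates V0 E eps A W \<longleftrightarrow>
     real (vol E V0 (W \<inter> A)) > (1 - 3 * eps) * real (vol E V0 W)"

definition grab :: "('a \<times> 'a) set \<Rightarrow> 'a set \<Rightarrow> 'a set \<Rightarrow> 'a set" where
  "grab E V S = S \<union> {v \<in> V - S. deg E V v > 0 \<and>
                          real (card (nbrs E V v \<inter> S)) \<ge> 1/6 * real (deg E V v)}"

definition li_step :: "('a \<times> 'a) set \<Rightarrow> 'a set \<Rightarrow> 'a set \<Rightarrow> 'a set \<Rightarrow> bool" where
  "li_step E V S S' \<longleftrightarrow>
     (\<exists>v \<in> V - S. deg E V v > 0 \<and>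
        real (card (nbrs E V v \<inter> S)) \<ge> 5/9 * real (deg E V v) \<and> S' = insert v S)"

text \<open>S' is a possible outcome of running local improvements of S in G0|V to completion
(any order of choices).\<close>
definition local_improvements :: "('a \<times> 'a) set \<Rightarrow> 'a set \<Rightarrow> 'a set \<Rightarrow> 'a set \<Rightarrow> bool" where
  "local_improvements E V S S' \<longleftrightarrow>
     (li_step E V)\<^sup>*\<^sup>* S S' \<and> \<not> (\<exists>S''. li_step E V S' S'')"

end

theory Submission
  imports Defs
begin

text \<open>Since \<open>V - S\<close> dominates \<open>W\<close>, the part of \<open>W\<close> lying in \<open>S\<close> or outside \<open>V\<close> has
  volume below \<open>3\<epsilon> vol W\<close>. A grab multiplies the volume of \<open>W \<inter> S\<close> by at most 7 and a run of
  local improvements by at most 10, up to multiples of \<open>vol (W - V)\<close> and of the boundary of \<open>W\<close>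
  (at most \<open>\<epsilon> vol W\<close>); so after the big expansion \<open>W \<inter> S\<close> still has volume \<open>O(\<epsilon>) vol W\<close>.
  The part \<open>X\<close> of \<open>W\<close> missed by the final complement lies in \<open>W - V\<close> or in the expanded \<open>S\<close>,
  hence is small, and as \<open>V\<close> is closed in \<open>G\<^sub>0\<close> and the final complement is closed in \<open>G\<close>,
  every vertex of \<open>X\<close> sends at most \<open>5/9\<close> of its degree into \<open>W - X\<close>. The spectral-cluster
  inequality for \<open>X\<close> then forces \<open>vol X < 3\<epsilon> vol W\<close>.\<close>

text \<open>Counting ordered pairs makes volumes and cuts instances of one additive quantity.\<close>

definition arcs :: "('a \<times> 'a) set \<Rightarrow> 'a set \<Rightarrow> 'a set \<Rightarrow> nat" where
  "arcs E A B = card (E \<inter> A \<times> B)"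

lemma arcs_mono: "finite E \<Longrightarrow> A \<subseteq> A' \<Longrightarrow> B \<subseteq> B' \<Longrightarrow> arcs E A B \<le> arcs E A' B'"
  unfolding arcs_def by (rule card_mono) auto

lemma arcs_Un_left:
  assumes "finite E" "A \<inter> A' = {}"
  shows "arcs E (A \<union> A') B = arcs E A B + arcs E A' B"
proof -
  have "E \<inter> (A \<union> A') \<times> B = (E \<inter> A \<times> B) \<union> (E \<inter> A' \<times> B)" by blast
  then show ?thesis unfolding arcs_def using assms by (simp add: card_Un_disjoint disjoint_iff)
qed

lemma arcs_Un_right:
  assumes "finite E" "B \<inter> B' = {}"
  shows "arcs E A (B \<union> B') = arcs E A B + arcs E A B'"
proof -
  have "E \<inter> A \<times> (B \<union> B') = (E \<inter> A \<times> B) \<union> (E \<inter> A \<times> B')" by blast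
  then show ?thesis unfolding arcs_def using assms by (simp add: card_Un_disjoint disjoint_iff)
qed

lemma arcs_le_cover_left: "finite E \<Longrightarrow> A \<subseteq> A1 \<union> A2 \<Longrightarrow> arcs E A B \<le> arcs E A1 B + arcs E A2 B"
  unfolding arcs_def by (rule order_trans[OF card_mono card_Un_le]) auto

lemma arcs_le_cover_right: "finite E \<Longrightarrow> B \<subseteq> B1 \<union> B2 \<Longrightarrow> arcs E A B \<le> arcs E A B1 + arcs E A B2"
  unfolding arcs_def by (rule order_trans[OF card_mono card_Un_le]) auto

lemma arcs_commute: "sym E \<Longrightarrow> arcs E A B = arcs E B A"
proof -
  assume "sym E"
  then have "E \<inter> A \<times> B = (E \<inter> B \<times> A)\<inverse>"
    by (simp add: sym_conv_converse_eq converse_Int converse_Times)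
  then show ?thesis unfolding arcs_def by simp
qed

lemma arcs_le_commute:
  "finite E \<Longrightarrow> sym E \<Longrightarrow> A \<subseteq> A' \<Longrightarrow> B \<subseteq> B' \<Longrightarrow> arcs E A B \<le> arcs E B' A'"
  by (simp add: arcs_commute[of E A B] arcs_mono)

lemma arcs_singleton: "arcs E {v} B = card {u \<in> B. (v, u) \<in> E}"
proof -
  have "E \<inter> {v} \<times> B = Pair v ` {u \<in> B. (v, u) \<in> E}" by auto
  then show ?thesis unfolding arcs_def by (simp add: card_image inj_on_def)
qed

lemma arcs_eq_sum: "finite E \<Longrightarrow> finite A \<Longrightarrow> arcs E A B = (\<Sum>v\<in>A. arcs E {v} B)"
proof -
  assume fin: "finite E" "finite A"
  have "E \<inter> A \<times> B = (SIGMA v:A. {u \<in> B. (v, u) \<in> E})" by auto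
  moreover have "finite {u \<in> B. (v, u) \<in> E}" for v
    using finite_imageI[OF fin(1), of snd] by (rule finite_subset[rotated]) force
  ultimately show ?thesis using fin by (simp add: arcs_def arcs_singleton[unfolded arcs_def])
qed

lemma arcs_scaled_le:
  assumes "finite E" "finite A" "\<And>v. v \<in> A \<Longrightarrow> c * arcs E {v} B \<le> d * arcs E {v} C"
  shows "c * arcs E A B \<le> d * arcs E A C"
proof -
  have "c * arcs E A B = (\<Sum>v\<in>A. c * arcs E {v} B)"
    using assms(1,2) by (simp add: arcs_eq_sum[of E A B] sum_distrib_left)
  also have "\<dots> \<le> (\<Sum>v\<in>A. d * arcs E {v} C)" by (rule sum_mono) (rule assms(3))
  also have "\<dots> = d * arcs E A C"
    using assms(1,2) by (simp add: arcs_eq_sum[of E A C] sum_distrib_left)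
  finally show ?thesis .
qed

lemma deg_eq_arcs: "deg E V v = arcs E {v} V"
  by (simp add: deg_def nbrs_def arcs_singleton)

lemma card_nbrs_Int: "card (nbrs E V v \<inter> B) = arcs E {v} (V \<inter> B)"
  unfolding nbrs_def arcs_singleton by (rule arg_cong[where f = card]) auto

lemma vol_eq_arcs: "finite E \<Longrightarrow> finite A \<Longrightarrow> vol E V A = arcs E A V"
  by (simp add: vol_def deg_eq_arcs arcs_eq_sum[of E A V])

lemma arcs_singleton_self: "irrefl E \<Longrightarrow> arcs E {v} {v} = 0"
  by (simp add: arcs_singleton irrefl_def)

lemma card_edges_between_eq_arcs:
  assumes "A \<inter> B = {}"
  shows "card (edges_between E A B) = arcs E A B"
proof -
  have "inj_on (\<lambda>(u, v). {u, v}) (E \<inter> A \<times> B)"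
  proof (rule inj_onI, clarsimp)
    fix a b c d
    assume "{a, b} = {c, d}" "a \<in> A" "b \<in> B" "c \<in> A" "d \<in> B"
    with assms show "a = c \<and> b = d" by (metis disjoint_iff doubleton_eq_iff)
  qed
  moreover have "edges_between E A B = (\<lambda>(u, v). {u, v}) ` (E \<inter> A \<times> B)"
    unfolding edges_between_def by force
  ultimately show ?thesis unfolding arcs_def by (simp add: card_image)
qed

lemma closed_in_graph_arcs_le:
  assumes "finite E" "A \<subseteq> V" "closed_in_graph E V A" "v \<in> V - A"
  shows "9 * arcs E {v} A \<le> 5 * arcs E {v} V"
proof (cases "deg E V v > 0")
  case True
  with assms(3,4) have "\<not> 5/9 * real (deg E V v) \<le> real (card (nbrs E V v \<inter> A))"
    unfolding closed_in_graph_def by blast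
  with assms(2) have "\<not> 5 * real (arcs E {v} V) \<le> 9 * real (arcs E {v} A)"
    by (simp add: deg_eq_arcs card_nbrs_Int Int_absorb1)
  then show ?thesis by linarith
next
  case False
  then have "arcs E {v} V = 0" by (simp add: deg_eq_arcs)
  moreover have "arcs E {v} A \<le> arcs E {v} V" using assms(1,2) by (simp add: arcs_mono)
  ultimately show ?thesis by simp
qed

lemma closed_in_graph_iff_no_li_step: "closed_in_graph E V S \<longleftrightarrow> (\<nexists>S'. li_step E V S S')"
  unfolding closed_in_graph_def li_step_def by blast

lemma local_improvements_closed: "local_improvements E V S T \<Longrightarrow> closed_in_graph E V T"
  by (simp add: local_improvements_def closed_in_graph_iff_no_li_step)

lemma li_steps_subset: "(li_step E V)\<^sup>*\<^sup>* S T \<Longrightarrow> S \<subseteq> V \<Longrightarrow> S \<subseteq> T \<and> T \<subseteq> V"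
  by (induction rule: rtranclp_induct) (auto simp: li_step_def)

lemma local_improvements_subset: "local_improvements E V S T \<Longrightarrow> S \<subseteq> V \<Longrightarrow> S \<subseteq> T \<and> T \<subseteq> V"
  unfolding local_improvements_def using li_steps_subset by blast

lemma grab_subset: "S \<subseteq> V \<Longrightarrow> grab E V S \<subseteq> V"
  by (auto simp: grab_def)

lemma arcs_Int_grab_le:
  assumes "finite E" "sym E" "finite W" "V \<subseteq> V0" "S \<subseteq> V"
  shows "arcs E (W \<inter> grab E V S) V0
           \<le> 7 * arcs E (W \<inter> S) V0 + arcs E (W - V) V0 + 7 * arcs E W (V0 - W)"
proof -
  define B where "B = W \<inter> (grab E V S - S)"
  have B: "finite B" "B \<subseteq> W" "B \<subseteq> V0" using assms(3-5) by (auto simp: B_def grab_def)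
  have "1 * arcs E B V \<le> 6 * arcs E B S"
  proof (rule arcs_scaled_le[OF assms(1) B(1)])
    fix v assume "v \<in> B"
    then have "1/6 * real (deg E V v) \<le> real (card (nbrs E V v \<inter> S))"
      by (auto simp: B_def grab_def)
    with assms(5) show "1 * arcs E {v} V \<le> 6 * arcs E {v} S"
      by (simp add: deg_eq_arcs card_nbrs_Int Int_absorb1)
  qed
  moreover have "arcs E (W \<inter> grab E V S) V0 \<le> arcs E (W \<inter> S) V0 + arcs E B V0"
    by (rule arcs_le_cover_left[OF assms(1)]) (auto simp: B_def)
  moreover have "arcs E B V0 \<le> arcs E B V + arcs E B ((W - V) \<union> (V0 - W))"
    by (rule arcs_le_cover_right[OF assms(1)]) auto
  moreover have "arcs E B ((W - V) \<union> (V0 - W)) \<le> arcs E B (W - V) + arcs E B (V0 - W)"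
    by (rule arcs_le_cover_right[OF assms(1)]) auto
  moreover have "arcs E B S \<le> arcs E B (W \<inter> S) + arcs E B (V0 - W)"
    by (rule arcs_le_cover_right[OF assms(1)]) (use assms(4,5) in auto)
  moreover have "arcs E B (W \<inter> S) \<le> arcs E (W \<inter> S) V0"
    using assms(1,2) B(3) by (rule arcs_le_commute) simp
  moreover have "arcs E B (W - V) \<le> arcs E (W - V) V0"
    using assms(1,2) B(3) by (rule arcs_le_commute) simp
  moreover have "arcs E B (V0 - W) \<le> arcs E W (V0 - W)"
    using assms(1) B(2) by (rule arcs_mono) simp
  ultimately show ?thesis by linarith
qed

text \<open>A vertex joining \<open>W \<inter> S\<close> by a local improvement has at least \<open>5/9\<close> of its degree in \<open>G\<close>
  going into \<open>S\<close>, so the gain in arcs inside \<open>W \<inter> S\<close> pays for its volume, except for arcs into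
  \<open>W - V\<close> or out of \<open>W\<close>, which the last two terms absorb.\<close>

definition improvement_potential ::
    "('a \<times> 'a) set \<Rightarrow> 'a set \<Rightarrow> 'a set \<Rightarrow> 'a set \<Rightarrow> 'a set \<Rightarrow> int" where
  "improvement_potential E V0 V W S =
     9 * int (arcs E (W \<inter> S) (W \<inter> S)) - 10 * int (arcs E (W \<inter> S) V0)
     + 18 * int (arcs E (W \<inter> S) (W - V)) + 36 * int (arcs E (W \<inter> S) (V0 - W))"

lemma improvement_potential_li_step:
  assumes "finite E" "sym E" "irrefl E" "V \<subseteq> V0" "S \<subseteq> V" "li_step E V S S'"
  shows "improvement_potential E V0 V W S \<le> improvement_potential E V0 V W S'"
proof -
  obtain v where v: "v \<in> V - S" "5/9 * real (deg E V v) \<le> real (card (nbrs E V v \<inter> S))"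
    and S': "S' = insert v S"
    using assms(6) unfolding li_step_def by blast
  show ?thesis
  proof (cases "v \<in> W")
    case False
    then have "W \<inter> S' = W \<inter> S" by (auto simp: S')
    then show ?thesis by (simp add: improvement_potential_def)
  next
    case True
    define Y where "Y = W \<inter> S"
    have Y': "W \<inter> S' = {v} \<union> Y" and disj: "{v} \<inter> Y = {}"
      using True v(1) by (auto simp: S' Y_def)
    have "5 * arcs E {v} V \<le> 9 * arcs E {v} S"
      using v(2) assms(5) by (simp add: deg_eq_arcs card_nbrs_Int Int_absorb1)
    moreover have "arcs E {v} S \<le> arcs E {v} Y + arcs E {v} (V0 - W)"
      by (rule arcs_le_cover_right[OF assms(1)]) (use assms(4,5) in \<open>auto simp: Y_def\<close>)
    moreover have "arcs E {v} V0 \<le> arcs E {v} V + arcs E {v} ((W - V) \<union> (V0 - W))"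
      by (rule arcs_le_cover_right[OF assms(1)]) auto
    moreover have "arcs E {v} ((W - V) \<union> (V0 - W)) \<le> arcs E {v} (W - V) + arcs E {v} (V0 - W)"
      by (rule arcs_le_cover_right[OF assms(1)]) auto
    moreover have "arcs E ({v} \<union> Y) ({v} \<union> Y) = arcs E Y Y + 2 * arcs E {v} Y"
      using arcs_Un_left[OF assms(1) disj] arcs_Un_right[OF assms(1) disj]
        arcs_commute[OF assms(2), of Y "{v}"] arcs_singleton_self[OF assms(3)] by simp
    moreover note arcs_Un_left[OF assms(1) disj, of V0] arcs_Un_left[OF assms(1) disj, of "W - V"]
      arcs_Un_left[OF assms(1) disj, of "V0 - W"]
    ultimately show ?thesis
      unfolding improvement_potential_def Y' Y_def[symmetric] by linarith
  qed
qed

lemma arcs_Int_li_steps_le: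
  assumes "finite E" "sym E" "irrefl E" "V \<subseteq> V0" "S \<subseteq> V" "(li_step E V)\<^sup>*\<^sup>* S T"
  shows "arcs E (W \<inter> T) V0
           \<le> 10 * arcs E (W \<inter> S) V0 + 18 * arcs E (W - V) V0 + 36 * arcs E W (V0 - W)"
proof -
  have "improvement_potential E V0 V W S \<le> improvement_potential E V0 V W T"
    using assms(6)
  proof (induction rule: rtranclp_induct)
    case (step T T')
    have "T \<subseteq> V" using li_steps_subset[OF step(1) assms(5)] by blast
    then have "improvement_potential E V0 V W T \<le> improvement_potential E V0 V W T'"
      by (rule improvement_potential_li_step[OF assms(1-4) _ step(2)])
    with step(3) show ?case by simp
  qed simp
  moreover have "T \<subseteq> V0" using li_steps_subset[OF assms(6,5)] assms(4) by blast
  then have "arcs E (W \<inter> T) (W \<inter> T) \<le> arcs E (W \<inter> T) V0"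
    using assms(1) by (intro arcs_mono) auto
  moreover have "arcs E (W \<inter> T) (W - V) \<le> arcs E (W - V) V0"
    using assms(1,2) \<open>T \<subseteq> V0\<close> by (intro arcs_le_commute) auto
  moreover have "arcs E (W \<inter> T) (V0 - W) \<le> arcs E W (V0 - W)"
    using assms(1) by (intro arcs_mono) auto
  ultimately show ?thesis unfolding improvement_potential_def by linarith
qed

lemma dominates_iff_vol_diff_less:
  assumes "finite W"
  shows "dominates V0 E eps A W \<longleftrightarrow> real (vol E V0 (W - A)) < 3 * eps * real (vol E V0 W)"
proof -
  have "vol E V0 W = vol E V0 (W \<inter> A) + vol E V0 (W - A)"
    unfolding vol_def using assms by (rule sum.Int_Diff)
  then show ?thesis unfolding dominates_def by (simp add: algebra_simps)
qed

lemma vol_Int_plus_vol_diff_lt: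
  assumes "finite W" "S \<subseteq> V" "dominates V0 E eps (V - S) W"
  shows "real (vol E V0 (W \<inter> S) + vol E V0 (W - V)) < 3 * eps * real (vol E V0 W)"
proof -
  have "vol E V0 (W - (V - S)) = vol E V0 ((W \<inter> S) \<union> (W - V))"
    using assms(2) by (intro arg_cong[where f = "vol E V0"]) auto
  also have "\<dots> = vol E V0 (W \<inter> S) + vol E V0 (W - V)"
    unfolding vol_def using assms(1,2) by (intro sum.union_disjoint) auto
  finally show ?thesis using assms by (simp add: dominates_iff_vol_diff_less)
qed

lemma simple_graph_finite_edges: "simple_graph V0 E \<Longrightarrow> finite E"
  unfolding simple_graph_def by (meson finite_SigmaI finite_subset)

lemma vol_big_expansion_le:
  assumes "simple_graph V0 E" "V \<subseteq> V0" "S \<subseteq> V" "W \<subseteq> V0"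
    and "local_improvements E V (grab E V S) S2" "local_improvements E V (grab E V S2) S4"
  shows "vol E V0 (W \<inter> S4) \<le> 4900 * vol E V0 (W \<inter> S) + 1988 * vol E V0 (W - V)
           + 7526 * card (edges_between E W (V0 - W))"
proof -
  have E: "finite E" "sym E" "irrefl E"
    using assms(1) simple_graph_finite_edges unfolding simple_graph_def by auto
  have W: "finite W" using assms(1,4) finite_subset unfolding simple_graph_def by blast
  have vol: "vol E V0 A = arcs E A V0" if "A \<subseteq> W" for A
    using vol_eq_arcs[OF E(1)] finite_subset[OF that W] by blast
  have S2: "S2 \<subseteq> V"
    using local_improvements_subset[OF assms(5) grab_subset[OF assms(3)]] by blast
  have "arcs E (W \<inter> S4) V0 \<le> 10 * arcs E (W \<inter> grab E V S2) V0 + 18 * arcs E (W - V) V0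
          + 36 * arcs E W (V0 - W)"
    using assms(6) grab_subset[OF S2]
    by (intro arcs_Int_li_steps_le[OF E assms(2)]) (auto simp: local_improvements_def)
  moreover have "arcs E (W \<inter> S2) V0 \<le> 10 * arcs E (W \<inter> grab E V S) V0 + 18 * arcs E (W - V) V0
          + 36 * arcs E W (V0 - W)"
    using assms(5) grab_subset[OF assms(3)]
    by (intro arcs_Int_li_steps_le[OF E assms(2)]) (auto simp: local_improvements_def)
  moreover note arcs_Int_grab_le[OF E(1,2) W assms(2) assms(3)] arcs_Int_grab_le[OF E(1,2) W assms(2) S2]
  ultimately show ?thesis
    by (simp add: vol card_edges_between_eq_arcs)
qed

lemma card_edges_between_closed_le:
  assumes "simple_graph V0 E" "V \<subseteq> V0" "closed_in_graph E V0 V" "T \<subseteq> V" "closed_in_graph E V T"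
    and "X \<subseteq> V0 - T" "Y \<subseteq> T"
  shows "9 * card (edges_between E X Y) \<le> 5 * vol E V0 X"
proof -
  have E: "finite E" using assms(1) by (rule simple_graph_finite_edges)
  have X: "finite X" using assms(1,6) finite_subset unfolding simple_graph_def by blast
  have "9 * arcs E X T \<le> 5 * arcs E X V0"
  proof (rule arcs_scaled_le[OF E X])
    fix v assume "v \<in> X"
    show "9 * arcs E {v} T \<le> 5 * arcs E {v} V0"
    proof (cases "v \<in> V")
      case True
      with \<open>v \<in> X\<close> assms(6) have "9 * arcs E {v} T \<le> 5 * arcs E {v} V"
        by (intro closed_in_graph_arcs_le[OF E assms(4,5)]) auto
      moreover have "arcs E {v} V \<le> arcs E {v} V0" using E assms(2) by (simp add: arcs_mono)
      ultimately show ?thesis by linarith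
    next
      case False
      with \<open>v \<in> X\<close> assms(6) have "9 * arcs E {v} V \<le> 5 * arcs E {v} V0"
        by (intro closed_in_graph_arcs_le[OF E assms(2,3)]) auto
      moreover have "arcs E {v} T \<le> arcs E {v} V" using E assms(4) by (simp add: arcs_mono)
      ultimately show ?thesis by linarith
    qed
  qed
  moreover have "card (edges_between E X Y) = arcs E X Y"
    using assms(6,7) by (intro card_edges_between_eq_arcs) auto
  moreover have "arcs E X Y \<le> arcs E X T" using E assms(7) by (simp add: arcs_mono)
  ultimately show ?thesis using vol_eq_arcs[OF E X, of V0] by linarith
qed

lemma spectral_cluster_vol_lt_if_small_sparse:
  assumes "spectral_cluster V0 E eps W" "0 < eps" "X \<subseteq> W"
    and "80 * vol E V0 X \<le> vol E V0 W" "9 * card (edges_between E X (W - X)) \<le> 5 * vol E V0 X"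
  shows "real (vol E V0 X) < 3 * eps * real (vol E V0 W)"
proof -
  define x M where "x = real (vol E V0 X)" and "M = real (vol E V0 W)"
  have M: "M > 0" using assms(1) by (simp add: spectral_cluster_def M_def)
  define c where "c = real (card (edges_between E X (W - X)))"
  have "x - x * x / M - eps * M = (x / M * (1 - x / M) - eps) * M"
    using M by (simp add: field_simps)
  also have "\<dots> \<le> c"
    using assms(1,3) unfolding spectral_cluster_def x_def M_def c_def Let_def by blast
  finally have "x - x * x / M - eps * M \<le> c" .
  moreover have "x * x / M \<le> x / 80"
  proof -
    have "real (80 * vol E V0 X) \<le> M" unfolding M_def using assms(4) by (rule of_nat_mono)
    then have "x * x \<le> x * (M / 80)" by (intro mult_left_mono) (auto simp: x_def)
    with M show ?thesis by (simp add: field_simps)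
  qed
  moreover have "eps * M > 0" using assms(2) M by simp
  moreover have "9 * c \<le> 5 * x"
    using of_nat_mono[OF assms(5)] unfolding x_def c_def by simp
  ultimately have "x < 3 * (eps * M)" by linarith
  then show ?thesis by (simp add: x_def M_def mult.assoc)
qed

theorem mainTheorem10:
  fixes V0 :: "'a set" and E :: "('a \<times> 'a) set" and eps :: real
    and W V S S1 S2 S3 S4 Sbar5 :: "'a set"
  assumes graph: "simple_graph V0 E"
    and eps_pos: "0 < eps" and eps_le: "eps \<le> 1 / 2000000"
    and cluster: "spectral_cluster V0 E eps W"
    and V_sub: "V \<subseteq> V0"
    and V_closed: "closed_in_graph E V0 V"
    and V_dom: "dominates V0 E eps V W"
    and S_sub: "S \<subseteq> V"
    and S_closed: "closed_in_graph E V S"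
    and Sbar_closed: "closed_in_graph E V (V - S)"
    and Sbar_dom: "dominates V0 E eps (V - S) W"
    and step1: "S1 = grab E V S"
    and step2: "local_improvements E V S1 S2"
    and step3: "S3 = grab E V S2"
    and step4: "local_improvements E V S3 S4"
    and step5: "local_improvements E V (V - S4) Sbar5"
  shows "dominates V0 E eps Sbar5 W"
proof -
  have W: "W \<subseteq> V0" "finite W"
    using cluster graph finite_subset by (auto simp: spectral_cluster_def simple_graph_def)
  define M where "M = real (vol E V0 W)"
  have boundary: "real (card (edges_between E W (V0 - W))) \<le> eps * M"
    using cluster by (simp add: spectral_cluster_def M_def)
  have initial: "real (vol E V0 (W \<inter> S) + vol E V0 (W - V)) < 3 * eps * M"
    using vol_Int_plus_vol_diff_lt[OF W(2) S_sub Sbar_dom] by (simp add: M_def)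
  have S2: "S2 \<subseteq> V"
    using local_improvements_subset[OF step2] grab_subset[OF S_sub] step1 by blast
  have S4: "S4 \<subseteq> V"
    using local_improvements_subset[OF step4] grab_subset[OF S2] step3 by blast
  have expansion: "vol E V0 (W \<inter> S4) \<le> 4900 * vol E V0 (W \<inter> S) + 1988 * vol E V0 (W - V)
      + 7526 * card (edges_between E W (V0 - W))"
    by (rule vol_big_expansion_le[OF graph V_sub S_sub W(1) step2[unfolded step1] step4[unfolded step3]])
  have Sbar5: "V - S4 \<subseteq> Sbar5" "Sbar5 \<subseteq> V" "closed_in_graph E V Sbar5"
    using local_improvements_subset[OF step5] local_improvements_closed[OF step5] by auto
  define X where "X = W - Sbar5"
  have X: "X \<subseteq> W" "X \<subseteq> V0 - Sbar5" "W - X \<subseteq> Sbar5" using W(1) by (auto simp: X_def)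
  have "vol E V0 X \<le> vol E V0 ((W - V) \<union> (W \<inter> S4))"
    unfolding vol_def using W(2) Sbar5(1) by (intro sum_mono2) (auto simp: X_def)
  also have "\<dots> = vol E V0 (W - V) + vol E V0 (W \<inter> S4)"
    unfolding vol_def using W(2) S4 by (intro sum.union_disjoint) auto
  finally have "vol E V0 X \<le> 4900 * vol E V0 (W \<inter> S) + 1989 * vol E V0 (W - V)
      + 7526 * card (edges_between E W (V0 - W))" using expansion by linarith
  moreover have "eps * M \<le> 1 / 2000000 * M" using eps_le by (intro mult_right_mono) (auto simp: M_def)
  ultimately have "80 * real (vol E V0 X) \<le> M" using initial boundary by linarith
  then have "80 * vol E V0 X \<le> vol E V0 W" unfolding M_def by linarith
  moreover have "9 * card (edges_between E X (W - X)) \<le> 5 * vol E V0 X"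
    using card_edges_between_closed_le[OF graph V_sub V_closed Sbar5(2,3) X(2,3)] .
  ultimately have "real (vol E V0 X) < 3 * eps * M"
    using spectral_cluster_vol_lt_if_small_sparse[OF cluster eps_pos X(1)] by (simp add: M_def)
  then show ?thesis using W(2) by (simp add: dominates_iff_vol_diff_less X_def M_def)
qed

end
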